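(* Let $\sigma$ be a full-rank $d$-dimensional quantum state with eigendecomposition $\sigma=\sum_{i=1}^dq(i)\,|e_i\rangle\langle e_i|$ and minimum eigenvalue $\gamma=\min_iq(i)$. Let $\rho_1,\dots,\rho_T$ ($T\ge2$) be $d$-dimensional states, $\varrho=\rho_1\otimes\cdots\otimes\rho_T$, $\rho=\frac1T\sum_t\rho_t$, and $\mu=D_{\chi^2}(\rho\,\|\,\sigma)$. Define the observable $C=\sum_{i,j=1}^d\frac{|e_je_i\rangle\langle e_ie_j|}{q(i,j)}$ on $(\mathbb C^d)^{\otimes2}$ with $q(i,j)=\frac{q(i)+q(j)}2$, let $C_{st}$ denote $C$ applied to the $s$th and $t$th tensor components of $(\mathbb C^d)^{\otimes T}$, and let $M=\frac{T-1}T\Big(\binom T2^{-1}\sum_{1\le s<t\le T}C_{st}-I\Big)$. Then $$\big|\mathbb E_\varrho[M]-\mu\big|\le\sqrt{\frac d{\gamma T}}\sqrt\mu+\frac{d-1}T.$$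
   Context: $\mathbb E_\varrho[Y]=\mathrm{Tr}[\varrho Y]$. Bures $\chi^2$-divergence: writing $\sigma=U\,\mathrm{diag}(q_1,\dots,q_d)U^\dagger$ and $\rho'=U^\dagger\rho U$, $D_{\chi^2}(\rho\,\|\,\sigma)=\sum_{i,j}\frac{2}{q_i+q_j}|\rho'_{ij}|^2-1$. *)

theory Defs
  imports Complex_Main
begin

text \<open>A d-dimensional operator is a function A :: nat => nat => complex,
  only its entries A x y with x, y < d being relevant (computational basis indices 0..d-1).
  The T-fold tensor power (C^d)^{\<otimes>T} has the computational basis indexed by lists
  a of length T with entries < d; component t (0-based) of the tensor product corresponds
  to a ! t.\<close>

definition mtrace :: "nat \<Rightarrow> (nat \<Rightarrow> nat \<Rightarrow> complex) \<Rightarrow> complex" where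
  "mtrace d A = (\<Sum>i<d. A i i)"

definition is_state :: "nat \<Rightarrow> (nat \<Rightarrow> nat \<Rightarrow> complex) \<Rightarrow> bool" where
  "is_state d \<rho> \<longleftrightarrow>
     (\<forall>i<d. \<forall>j<d. \<rho> j i = cnj (\<rho> i j)) \<and>
     (\<forall>v :: nat \<Rightarrow> complex.
        (\<Sum>i<d. \<Sum>j<d. cnj (v i) * \<rho> i j * v j) \<in> \<real> \<and>
        0 \<le> Re (\<Sum>i<d. \<Sum>j<d. cnj (v i) * \<rho> i j * v j)) \<and>
     mtrace d \<rho> = 1"

definition orthonormal_basis :: "nat \<Rightarrow> (nat \<Rightarrow> nat \<Rightarrow> complex) \<Rightarrow> bool" where
  "orthonormal_basis d e \<longleftrightarrow>
     (\<forall>i<d. \<forall>j<d. (\<Sum>x<d. cnj (e i x) * e j x) = (if i = j then 1 else 0))"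

text \<open>Bures chi^2-divergence D(rho || sigma), where sigma = sum_i q i |e_i><e_i|
  (U has columns e_i, rho' = U^dagger rho U, so rho'_{ij} = <e_i| rho |e_j>).\<close>
definition chi2_div ::
  "nat \<Rightarrow> (nat \<Rightarrow> real) \<Rightarrow> (nat \<Rightarrow> nat \<Rightarrow> complex) \<Rightarrow> (nat \<Rightarrow> nat \<Rightarrow> complex) \<Rightarrow> real" where
  "chi2_div d q e \<rho> =
     (\<Sum>i<d. \<Sum>j<d. 2 / (q i + q j) *
        (cmod (\<Sum>x<d. \<Sum>y<d. cnj (e i x) * \<rho> x y * e j y))\<^sup>2) - 1"

definition multi_idx :: "nat \<Rightarrow> nat \<Rightarrow> nat list set" where
  "multi_idx d T = {a. length a = T \<and> (\<forall>k\<in>set a. k < d)}"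

definition prod_state :: "nat \<Rightarrow> (nat \<Rightarrow> nat \<Rightarrow> nat \<Rightarrow> complex) \<Rightarrow> nat list \<Rightarrow> nat list \<Rightarrow> complex" where
  "prod_state T \<rho>s a b = (\<Prod>t<T. \<rho>s t (a ! t) (b ! t))"

definition expect :: "nat \<Rightarrow> nat \<Rightarrow> (nat list \<Rightarrow> nat list \<Rightarrow> complex) \<Rightarrow> (nat list \<Rightarrow> nat list \<Rightarrow> complex) \<Rightarrow> complex" where
  "expect d T R Y = (\<Sum>a\<in>multi_idx d T. \<Sum>b\<in>multi_idx d T. R a b * Y b a)"

text \<open>The observable C = sum_{i,j} |e_j e_i><e_i e_j| / q(i,j) on (C^d)^{\<otimes>2},
  q(i,j) = (q i + q j)/2, as a matrix in the computational basis indexed by pairs.\<close>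
definition Cop :: "nat \<Rightarrow> (nat \<Rightarrow> real) \<Rightarrow> (nat \<Rightarrow> nat \<Rightarrow> complex) \<Rightarrow> nat \<times> nat \<Rightarrow> nat \<times> nat \<Rightarrow> complex" where
  "Cop d q e xy xy' = (case xy of (x, y) \<Rightarrow> case xy' of (x', y') \<Rightarrow>
     (\<Sum>i<d. \<Sum>j<d. e j x * e i y * cnj (e i x') * cnj (e j y') /
        complex_of_real ((q i + q j) / 2)))"

definition Cst :: "nat \<Rightarrow> (nat \<Rightarrow> real) \<Rightarrow> (nat \<Rightarrow> nat \<Rightarrow> complex) \<Rightarrow> nat \<Rightarrow> nat \<Rightarrow> nat list \<Rightarrow> nat list \<Rightarrow> complex" where
  "Cst d q e s t a b =
     Cop d q e (a ! s, a ! t) (b ! s, b ! t) *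
     (if (\<forall>u<length a. u \<noteq> s \<and> u \<noteq> t \<longrightarrow> a ! u = b ! u) then 1 else 0)"

definition Mop :: "nat \<Rightarrow> (nat \<Rightarrow> real) \<Rightarrow> (nat \<Rightarrow> nat \<Rightarrow> complex) \<Rightarrow> nat \<Rightarrow> nat list \<Rightarrow> nat list \<Rightarrow> complex" where
  "Mop d q e T a b =
     complex_of_real ((real T - 1) / real T) *
     (complex_of_real (1 / real (T choose 2)) *
        (\<Sum>t<T. \<Sum>s<t. Cst d q e s t a b) - (if a = b then 1 else 0))"

end

theory Submission
  imports Defs "Jordan_Normal_Form.Determinant" "HOL-Analysis.Convex"
begin

text \<open>Write Z_t for rho_t in the eigenbasis of sigma and |Z|^2 = sum_ij |Z_ij|^2 / q(i,j), so that
  mu = |sum_t Z_t|^2 / T^2 - 1.  For a product state the expectation of C_st is the q-weighted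
  pairing of Z_s and Z_t, so polarisation turns the average of the C_st into
  (|sum_t Z_t|^2 - sum_t |Z_t|^2) / (T (T - 1)), and E[M] - mu = (T - sum_t |Z_t|^2) / T^2.
  Each |Z_t|^2 lies between sum_i p_t(i)^2 / q(i) >= 1 and sum_i p_t(i) / q(i), where p_t is the
  diagonal of Z_t: positivity gives |Z_ij|^2 <= p(i) p(j), and 1/q(i,j) <= (1/q(i) + 1/q(j)) / 2.
  Averaging over t, the deviation is at most (sum_i (pbar(i) - q(i)) / q(i) + d - 1) / T, and by
  Cauchy-Schwarz the sum is at most sqrt (d / gamma) times the square root of the classical
  chi^2-divergence of pbar from q, which is itself at most mu.\<close>

section \<open>Sums over multi-indices\<close>

lemma multi_idx_0: "multi_idx d 0 = {[]}"
  by (auto simp: multi_idx_def)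

lemma multi_idx_Suc: "multi_idx d (Suc T) = (\<lambda>(a, x). a @ [x]) ` (multi_idx d T \<times> {..<d})"
proof
  show "multi_idx d (Suc T) \<subseteq> (\<lambda>(a, x). a @ [x]) ` (multi_idx d T \<times> {..<d})"
  proof
    fix a
    assume "a \<in> multi_idx d (Suc T)"
    then obtain y ys where "a = ys @ [y]" "length ys = T" "\<forall>k\<in>set a. k < d"
      by (auto simp: multi_idx_def length_Suc_conv_rev)
    then show "a \<in> (\<lambda>(a, x). a @ [x]) ` (multi_idx d T \<times> {..<d})"
      by (auto simp: multi_idx_def image_iff)
  qed
qed (auto simp: multi_idx_def)

lemma sum_multi_idx_prod:
  "(\<Sum>a\<in>multi_idx d T. \<Prod>t<T. f t (a ! t)) = (\<Prod>t<T. \<Sum>x<d. (f t x :: 'a::comm_semiring_1))"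
proof (induction T)
  case 0
  then show ?case by (simp add: multi_idx_0)
next
  case (Suc T)
  have inj: "inj_on (\<lambda>(a, x). a @ [x]) (multi_idx d T \<times> {..<d})"
    by (auto simp: inj_on_def)
  have snoc: "(\<Prod>t<Suc T. f t ((a @ [x]) ! t)) = (\<Prod>t<T. f t (a ! t)) * f T x"
    if "a \<in> multi_idx d T" for a x
  proof -
    have "length a = T"
      using that by (simp add: multi_idx_def)
    then have "(\<Prod>t<T. f t ((a @ [x]) ! t)) = (\<Prod>t<T. f t (a ! t))"
      by (intro prod.cong) (auto simp: nth_append)
    then show ?thesis
      using \<open>length a = T\<close> by (simp add: nth_append)
  qed
  have "(\<Sum>a\<in>multi_idx d (Suc T). \<Prod>t<Suc T. f t (a ! t))
      = (\<Sum>(a, x)\<in>multi_idx d T \<times> {..<d}. (\<Prod>t<T. f t (a ! t)) * f T x)"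
    unfolding multi_idx_Suc sum.reindex[OF inj]
    by (intro sum.cong refl) (auto simp del: prod.lessThan_Suc simp: snoc)
  also have "\<dots> = (\<Sum>a\<in>multi_idx d T. \<Prod>t<T. f t (a ! t)) * (\<Sum>x<d. f T x)"
    by (simp add: sum_product sum.cartesian_product)
  finally show ?case
    using Suc by simp
qed

lemma sum_multi_idx_prod2:
  "(\<Sum>a\<in>multi_idx d T. \<Sum>b\<in>multi_idx d T. \<Prod>t<T. g t (a ! t) (b ! t))
     = (\<Prod>t<T. \<Sum>x<d. \<Sum>y<d. (g t x y :: 'a::comm_semiring_1))"
proof -
  have "(\<Sum>a\<in>multi_idx d T. \<Sum>b\<in>multi_idx d T. \<Prod>t<T. g t (a ! t) (b ! t))
      = (\<Sum>a\<in>multi_idx d T. \<Prod>t<T. \<Sum>y<d. g t (a ! t) y)"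
    by (intro sum.cong refl sum_multi_idx_prod)
  also have "\<dots> = (\<Prod>t<T. \<Sum>x<d. \<Sum>y<d. g t x y)"
    by (rule sum_multi_idx_prod)
  finally show ?thesis .
qed

lemma prod_of_bool:
  assumes "finite A"
  shows "(\<Prod>u\<in>A. of_bool (P u) :: 'a::comm_semiring_1) = of_bool (\<forall>u\<in>A. P u)"
  using assms by (induction A rule: finite_induct) auto

lemma prod_lessThan_split_two:
  fixes s t T :: nat
  assumes "s < t" "t < T"
  shows "(\<Prod>u<T. f u) = f s * f t * (\<Prod>u\<in>{..<T} - {s, t}. (f u :: 'a::comm_monoid_mult))"
proof -
  have "{..<T} = insert s (insert t ({..<T} - {s, t}))"
    using assms by auto
  then have "(\<Prod>u<T. f u) = (\<Prod>u\<in>insert s (insert t ({..<T} - {s, t})). f u)"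
    by (rule arg_cong)
  then show ?thesis
    using assms by (simp add: mult.assoc)
qed

lemma sum_swap_nested:
  "(\<Sum>a\<in>A. \<Sum>t\<in>C. \<Sum>s\<in>D t. f a t s) = (\<Sum>t\<in>C. \<Sum>s\<in>D t. \<Sum>a\<in>A. (f a t s :: 'a::comm_monoid_add))"
  by (subst sum.swap) (simp add: sum.swap[of _ A])

section \<open>Density matrices in an orthonormal basis\<close>

lemma orthonormal_basis_complete:
  assumes onb: "orthonormal_basis d e" and "x < d" "y < d"
  shows "(\<Sum>i<d. e i x * cnj (e i y)) = of_bool (x = y)"
proof -
  define A where "A = mat d d (\<lambda>(i, x). cnj (e i x))"
  define B where "B = mat d d (\<lambda>(x, j). e j x)"
  have A: "A \<in> carrier_mat d d" and B: "B \<in> carrier_mat d d"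
    by (auto simp: A_def B_def)
  have "A * B = 1\<^sub>m d"
    by (rule eq_matI)
      (use onb in \<open>auto simp: A_def B_def scalar_prod_def orthonormal_basis_def lessThan_atLeast0\<close>)
  then have "B * A = 1\<^sub>m d"
    by (rule mat_mult_left_right_inverse[OF A B])
  then have "(B * A) $$ (x, y) = 1\<^sub>m d $$ (x, y)"
    by simp
  then show ?thesis
    using assms by (simp add: A_def B_def scalar_prod_def lessThan_atLeast0 mult.commute)
qed

lemma eigenvalues_sum_eq_mtrace:
  assumes onb: "orthonormal_basis d e"
    and eig: "\<forall>x<d. \<forall>y<d. \<sigma> x y = (\<Sum>i<d. complex_of_real (q i) * e i x * cnj (e i y))"
  shows "(\<Sum>i<d. complex_of_real (q i)) = mtrace d \<sigma>"
proof -
  have "mtrace d \<sigma> = (\<Sum>x<d. \<Sum>i<d. complex_of_real (q i) * e i x * cnj (e i x))"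
    unfolding mtrace_def by (intro sum.cong refl) (simp add: eig)
  also have "\<dots> = (\<Sum>i<d. complex_of_real (q i) * (\<Sum>x<d. cnj (e i x) * e i x))"
    by (subst sum.swap) (simp add: sum_distrib_left ac_simps)
  also have "\<dots> = (\<Sum>i<d. complex_of_real (q i))"
    using onb by (intro sum.cong refl) (simp add: orthonormal_basis_def)
  finally show ?thesis ..
qed

definition basis_entry ::
  "nat \<Rightarrow> (nat \<Rightarrow> nat \<Rightarrow> complex) \<Rightarrow> (nat \<Rightarrow> nat \<Rightarrow> complex) \<Rightarrow> nat \<Rightarrow> nat \<Rightarrow> complex" where
  "basis_entry d e A i j = (\<Sum>x<d. \<Sum>y<d. cnj (e i x) * A x y * e j y)"

lemma is_stateD:
  assumes "is_state d A"
  shows is_state_hermitian: "\<forall>x<d. \<forall>y<d. A y x = cnj (A x y)"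
    and is_state_form_real: "(\<Sum>i<d. \<Sum>j<d. cnj (v i) * A i j * v j) \<in> \<real>"
    and is_state_form_nonneg: "0 \<le> Re (\<Sum>i<d. \<Sum>j<d. cnj (v i) * A i j * v j)"
    and is_state_mtrace: "mtrace d A = 1"
  using assms unfolding is_state_def by blast+

lemma basis_entry_hermitian:
  assumes herm: "\<forall>x<d. \<forall>y<d. A y x = cnj (A x y)"
  shows "basis_entry d e A j i = cnj (basis_entry d e A i j)"
proof -
  have herm': "cnj (A x y) = A y x" if "x < d" "y < d" for x y
    using herm that by (metis complex_cnj_cnj)
  have "cnj (basis_entry d e A i j) = (\<Sum>x<d. \<Sum>y<d. e i x * A y x * cnj (e j y))"
    unfolding basis_entry_def cnj_sum by (intro sum.cong refl) (simp add: herm')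
  also have "\<dots> = basis_entry d e A j i"
    unfolding basis_entry_def by (subst sum.swap) (simp add: mult.commute mult.left_commute)
  finally show ?thesis
    by simp
qed

lemma basis_entry_diag_real:
  assumes "\<forall>x<d. \<forall>y<d. A y x = cnj (A x y)"
  shows "basis_entry d e A i i = of_real (Re (basis_entry d e A i i))"
proof -
  have "Im (basis_entry d e A i i) = 0"
    using arg_cong[OF basis_entry_hermitian[OF assms, of e i i], of Im] by simp
  then show ?thesis
    by (simp add: complex_eq_iff)
qed

lemma mtrace_eq_sum_basis_entry:
  assumes "orthonormal_basis d e"
  shows "(\<Sum>i<d. basis_entry d e A i i) = mtrace d A"
proof -
  have "(\<Sum>i<d. basis_entry d e A i i) = (\<Sum>i<d. \<Sum>x<d. \<Sum>y<d. A x y * (e i y * cnj (e i x)))"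
    unfolding basis_entry_def by (simp add: ac_simps)
  also have "\<dots> = (\<Sum>x<d. \<Sum>y<d. \<Sum>i<d. A x y * (e i y * cnj (e i x)))"
    by (rule sum_swap_nested)
  also have "\<dots> = (\<Sum>x<d. \<Sum>y<d. A x y * of_bool (y = x))"
    using assms by (intro sum.cong refl) (simp add: orthonormal_basis_complete sum_distrib_left[symmetric])
  also have "\<dots> = mtrace d A"
    by (simp add: mtrace_def)
  finally show ?thesis .
qed

lemma basis_entry_average:
  "basis_entry d e (\<lambda>x y. (\<Sum>t<T. B t x y) / of_nat T) i j = (\<Sum>t<T. basis_entry d e (B t) i j) / of_nat T"
proof -
  have "basis_entry d e (\<lambda>x y. (\<Sum>t<T. B t x y) / of_nat T) i j
      = (\<Sum>x<d. \<Sum>y<d. \<Sum>t<T. cnj (e i x) * B t x y * e j y / of_nat T)"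
    unfolding basis_entry_def
    by (intro sum.cong refl) (simp add: sum_distrib_left sum_distrib_right sum_divide_distrib)
  also have "\<dots> = (\<Sum>t<T. \<Sum>x<d. \<Sum>y<d. cnj (e i x) * B t x y * e j y / of_nat T)"
    by (rule sum_swap_nested[symmetric])
  finally show ?thesis
    by (simp add: basis_entry_def sum_divide_distrib)
qed

lemma sum_diag_div_eq_mult_average:
  "(\<Sum>t<T. \<Sum>i<d. Re (basis_entry d e (B t) i i) / q i)
     = T * (\<Sum>i<d. Re (basis_entry d e (\<lambda>x y. (\<Sum>t<T. B t x y) / of_nat T) i i) / q i)"
proof (cases "T = 0")
  case False
  have "(\<Sum>t<T. \<Sum>i<d. Re (basis_entry d e (B t) i i) / q i)
      = (\<Sum>i<d. (\<Sum>t<T. Re (basis_entry d e (B t) i i)) / q i)"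
    by (simp add: sum.swap[where A = "{..<T}"] sum_divide_distrib)
  also have "\<dots> = T * (\<Sum>i<d. Re (basis_entry d e (\<lambda>x y. (\<Sum>t<T. B t x y) / of_nat T) i i) / q i)"
    unfolding sum_distrib_left basis_entry_average using False
    by (intro sum.cong refl) (simp add: Re_divide_of_nat field_simps)
  finally show ?thesis .
qed simp

lemma basis_entry_quadratic_form:
  "(\<Sum>x<d. \<Sum>y<d. cnj (a * e i x + b * e j x) * A x y * (a * e i y + b * e j y))
   = cnj a * a * basis_entry d e A i i + cnj a * b * basis_entry d e A i j
     + cnj b * a * basis_entry d e A j i + cnj b * b * basis_entry d e A j j"
proof -
  have "cnj (a * e i x + b * e j x) * A x y * (a * e i y + b * e j y)
      = cnj a * a * (cnj (e i x) * A x y * e i y) + cnj a * b * (cnj (e i x) * A x y * e j y)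
        + cnj b * a * (cnj (e j x) * A x y * e i y) + cnj b * b * (cnj (e j x) * A x y * e j y)"
    for x y
    by (simp add: algebra_simps)
  then show ?thesis
    unfolding basis_entry_def by (simp add: sum.distrib sum_distrib_left)
qed

lemma le_mult_if_quadratic_nonneg:
  fixes a b w :: real
  assumes "0 \<le> a" "0 \<le> b" "0 \<le> w" and quad: "\<And>s. 0 \<le> s\<^sup>2 * a - 2 * s * w + w * b"
  shows "w \<le> a * b"
proof (cases "a = 0")
  case True
  have "0 \<le> (b + 1)\<^sup>2 * a - 2 * (b + 1) * w + w * b"
    by (rule quad)
  then have "w * (b + 2) \<le> 0"
    using True by (simp add: algebra_simps)
  then show ?thesis
    using assms True by (simp add: mult_le_0_iff)
next
  case False
  then have "0 < a"
    using assms by simp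
  have "0 \<le> (w / a)\<^sup>2 * a - 2 * (w / a) * w + w * b"
    by (rule quad)
  then have "0 \<le> w * (a * b - w) / a"
    using \<open>0 < a\<close> by (simp add: field_simps power2_eq_square)
  then have "0 \<le> w * (a * b - w)"
    using \<open>0 < a\<close> by (simp add: zero_le_divide_iff)
  then show ?thesis
    using assms by (cases "w = 0") (auto simp: zero_le_mult_iff)
qed

lemma state_basis_entry_diag_nonneg:
  assumes "is_state d A"
  shows "0 \<le> Re (basis_entry d e A i i)"
  using is_state_form_nonneg[OF assms] unfolding basis_entry_def by blast

lemma state_basis_entry_norm_le:
  assumes st: "is_state d A"
  shows "(cmod (basis_entry d e A i j))\<^sup>2 \<le> Re (basis_entry d e A i i) * Re (basis_entry d e A j j)"
proof -
  define z where "z = basis_entry d e A i j"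
  define a where "a = Re (basis_entry d e A i i)"
  define b where "b = Re (basis_entry d e A j j)"
  note herm = is_state_hermitian[OF st]
  have zji: "basis_entry d e A j i = cnj z"
    unfolding z_def by (rule basis_entry_hermitian[OF herm])
  have ai: "basis_entry d e A i i = of_real a" and bj: "basis_entry d e A j j = of_real b"
    unfolding a_def b_def by (rule basis_entry_diag_real[OF herm])+
  have quad: "0 \<le> s\<^sup>2 * a - 2 * s * (cmod z)\<^sup>2 + (cmod z)\<^sup>2 * b" for s :: real
  proof -
    let ?v = "\<lambda>x. complex_of_real s * e i x + (- cnj z) * e j x"
    have "0 \<le> Re (\<Sum>x<d. \<Sum>y<d. cnj (?v x) * A x y * ?v y)"
      by (rule is_state_form_nonneg[OF st])
    also have "(\<Sum>x<d. \<Sum>y<d. cnj (?v x) * A x y * ?v y)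
        = cnj (of_real s) * of_real s * of_real a + cnj (of_real s) * (- cnj z) * z
          + cnj (- cnj z) * of_real s * cnj z + cnj (- cnj z) * (- cnj z) * of_real b"
      by (subst basis_entry_quadratic_form) (simp add: zji ai bj z_def)
    also have "Re \<dots> = s\<^sup>2 * a - 2 * s * (cmod z)\<^sup>2 + (cmod z)\<^sup>2 * b"
      using cmod_power2[of z] by (simp add: power2_eq_square algebra_simps)
    finally show ?thesis .
  qed
  show ?thesis
    unfolding z_def[symmetric] a_def[symmetric] b_def[symmetric]
    using st by (intro le_mult_if_quadratic_nonneg quad) (auto simp: a_def b_def state_basis_entry_diag_nonneg)
qed

lemma is_state_average:
  assumes "0 < T" and states: "\<forall>t<T. is_state d (\<rho>s t)"
  shows "is_state d (\<lambda>x y. (\<Sum>t<T. \<rho>s t x y) / of_nat T)"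
proof -
  let ?Q = "\<lambda>t v. \<Sum>i<d. \<Sum>j<d. cnj (v i) * \<rho>s t i j * v j"
  have herm: "\<forall>x<d. \<forall>y<d. (\<Sum>t<T. \<rho>s t y x) / of_nat T = cnj ((\<Sum>t<T. \<rho>s t x y) / of_nat T)"
  proof (intro allI impI)
    fix x y
    assume "x < d" "y < d"
    then have "\<rho>s t y x = cnj (\<rho>s t x y)" if "t < T" for t
      using is_state_hermitian[OF states[rule_format, OF that]] by blast
    then have "(\<Sum>t<T. \<rho>s t y x) = cnj (\<Sum>t<T. \<rho>s t x y)"
      unfolding cnj_sum by (intro sum.cong) auto
    then show "(\<Sum>t<T. \<rho>s t y x) / of_nat T = cnj ((\<Sum>t<T. \<rho>s t x y) / of_nat T)"
      by simp
  qed
  have form: "(\<Sum>i<d. \<Sum>j<d. cnj (v i) * ((\<Sum>t<T. \<rho>s t i j) / of_nat T) * v j)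
      = of_real ((\<Sum>t<T. Re (?Q t v)) / real T)" for v
  proof -
    have "(\<Sum>i<d. \<Sum>j<d. cnj (v i) * ((\<Sum>t<T. \<rho>s t i j) / of_nat T) * v j)
        = (\<Sum>i<d. \<Sum>j<d. \<Sum>t<T. cnj (v i) * \<rho>s t i j * v j / of_nat T)"
      by (intro sum.cong refl) (simp add: sum_distrib_left sum_distrib_right sum_divide_distrib)
    also have "\<dots> = (\<Sum>t<T. ?Q t v) / of_nat T"
      by (simp add: sum_swap_nested[symmetric, where A="{..<T}"] sum_divide_distrib)
    also have "(\<Sum>t<T. ?Q t v) = (\<Sum>t<T. of_real (Re (?Q t v)))"
    proof (rule sum.cong[OF refl])
      fix t
      assume "t \<in> {..<T}"
      then show "?Q t v = of_real (Re (?Q t v))"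
        using states by (intro of_real_Re[symmetric] is_state_form_real) simp
    qed
    finally show ?thesis
      by simp
  qed
  have "mtrace d (\<lambda>x y. (\<Sum>t<T. \<rho>s t x y) / of_nat T) = (\<Sum>t<T. mtrace d (\<rho>s t)) / of_nat T"
    unfolding mtrace_def by (simp add: sum_divide_distrib sum.swap[where A="{..<d}"])
  also have "\<dots> = 1"
    using states \<open>0 < T\<close> by (simp add: is_state_mtrace)
  finally have "mtrace d (\<lambda>x y. (\<Sum>t<T. \<rho>s t x y) / of_nat T) = 1" .
  moreover have "0 \<le> (\<Sum>t<T. Re (?Q t v)) / real T" for v
    using states by (intro divide_nonneg_nonneg sum_nonneg is_state_form_nonneg) auto
  ultimately show ?thesis
    unfolding is_state_def form Re_complex_of_real using herm by (blast intro: Reals_of_real)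
qed

section \<open>The weighted norm behind the Bures chi-squared divergence\<close>

definition chi2_form :: "nat \<Rightarrow> (nat \<Rightarrow> real) \<Rightarrow> (nat \<Rightarrow> nat \<Rightarrow> complex) \<Rightarrow> real" where
  "chi2_form d q Z = (\<Sum>i<d. \<Sum>j<d. 2 / (q i + q j) * (cmod (Z i j))\<^sup>2)"

lemma chi2_div_eq_chi2_form: "chi2_div d q e A = chi2_form d q (basis_entry d e A) - 1"
  by (simp add: chi2_div_def chi2_form_def basis_entry_def)

lemma chi2_form_divide: "chi2_form d q (\<lambda>i j. Z i j / of_nat n) = chi2_form d q Z / (real n)\<^sup>2"
  unfolding chi2_form_def by (simp add: sum_divide_distrib norm_divide power_divide)

lemma chi2_form_ge_diag:
  assumes "\<forall>i<d. 0 < q i"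
  shows "(\<Sum>i<d. (cmod (Z i i))\<^sup>2 / q i) \<le> chi2_form d q Z"
proof -
  have "(\<Sum>i<d. (cmod (Z i i))\<^sup>2 / q i) = (\<Sum>i<d. 2 / (q i + q i) * (cmod (Z i i))\<^sup>2)"
    by simp
  also have "\<dots> \<le> chi2_form d q Z"
    unfolding chi2_form_def using assms
    by (intro sum_mono member_le_sum) (auto intro!: mult_nonneg_nonneg simp: less_imp_le)
  finally show ?thesis .
qed

lemma two_div_add_le_mean_inverse:
  fixes a b :: real
  assumes "0 < a" "0 < b"
  shows "2 / (a + b) \<le> (1 / a + 1 / b) / 2"
proof -
  have "0 \<le> (a - b)\<^sup>2"
    by simp
  then show ?thesis
    using assms by (simp add: field_simps power2_eq_square)
qed

lemma chi2_form_le: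
  assumes q: "\<forall>i<d. 0 < q i"
    and Z: "\<And>i j. i < d \<Longrightarrow> j < d \<Longrightarrow> (cmod (Z i j))\<^sup>2 \<le> p i * p j"
  shows "chi2_form d q Z \<le> (\<Sum>i<d. p i / q i) * (\<Sum>i<d. p i)"
proof -
  have "chi2_form d q Z \<le> (\<Sum>i<d. \<Sum>j<d. (1 / q i + 1 / q j) / 2 * (p i * p j))"
    unfolding chi2_form_def
  proof (intro sum_mono mult_mono)
    fix i j
    assume "i \<in> {..<d}" "j \<in> {..<d}"
    then have "0 < q i" "0 < q j"
      using q by auto
    then show "2 / (q i + q j) \<le> (1 / q i + 1 / q j) / 2" "0 \<le> (1 / q i + 1 / q j) / 2"
      by (rule two_div_add_le_mean_inverse, simp)
    show "(cmod (Z i j))\<^sup>2 \<le> p i * p j"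
      using Z \<open>i \<in> {..<d}\<close> \<open>j \<in> {..<d}\<close> by simp
  qed simp
  also have "\<dots> = (\<Sum>i<d. \<Sum>j<d. (p i / q i * p j + p i * (p j / q j)) / 2)"
    by (intro sum.cong refl) (simp add: field_simps)
  also have "\<dots> = ((\<Sum>i<d. \<Sum>j<d. p i / q i * p j) + (\<Sum>i<d. \<Sum>j<d. p i * (p j / q j))) / 2"
    by (simp only: sum_divide_distrib[symmetric] sum.distrib)
  also have "\<dots> = ((\<Sum>i<d. p i / q i) * (\<Sum>j<d. p j) + (\<Sum>i<d. p i) * (\<Sum>j<d. p j / q j)) / 2"
    by (simp only: sum_product)
  also have "\<dots> = (\<Sum>i<d. p i / q i) * (\<Sum>i<d. p i)"
    by (simp add: field_simps)
  finally show ?thesis .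
qed

lemma sum_sq_diff_div_eq:
  fixes x q :: "nat \<Rightarrow> real"
  assumes "\<forall>i<d. 0 < q i" "(\<Sum>i<d. q i) = 1"
  shows "(\<Sum>i<d. (x i - q i)\<^sup>2 / q i) = (\<Sum>i<d. (x i)\<^sup>2 / q i) - 2 * (\<Sum>i<d. x i) + 1"
proof -
  have "(x i - q i)\<^sup>2 / q i = (x i)\<^sup>2 / q i - 2 * x i + q i" if "i \<in> {..<d}" for i
  proof -
    have "0 < q i"
      using assms(1) that by simp
    have "(x i - q i)\<^sup>2 = (x i)\<^sup>2 - 2 * x i * q i + q i * q i"
      by (simp add: power2_eq_square algebra_simps)
    then show ?thesis
      using \<open>0 < q i\<close> by (simp add: diff_divide_distrib add_divide_distrib)
  qed
  then have "(\<Sum>i<d. (x i - q i)\<^sup>2 / q i) = (\<Sum>i<d. (x i)\<^sup>2 / q i - 2 * x i + q i)"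
    by (rule sum.cong[OF refl])
  then show ?thesis
    using assms(2) by (simp add: sum.distrib sum_subtractf sum_distrib_left)
qed

lemma state_sum_diag_basis_entry:
  assumes "is_state d A" "orthonormal_basis d e"
  shows "(\<Sum>i<d. Re (basis_entry d e A i i)) = 1"
  using mtrace_eq_sum_basis_entry[OF assms(2), of A] is_state_mtrace[OF assms(1)]
  by (metis Re_sum one_complex.sel(1))

lemma chi2_classical_le_chi2_div:
  assumes st: "is_state d A" and onb: "orthonormal_basis d e"
    and q: "\<forall>i<d. 0 < q i" "(\<Sum>i<d. q i) = 1"
  shows "(\<Sum>i<d. (Re (basis_entry d e A i i) - q i)\<^sup>2 / q i) \<le> chi2_div d q e A"
proof -
  have diag: "cmod (basis_entry d e A i i) = \<bar>Re (basis_entry d e A i i)\<bar>" for i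
    by (subst basis_entry_diag_real[OF is_state_hermitian[OF st]]) (rule norm_of_real)
  have "(\<Sum>i<d. (Re (basis_entry d e A i i) - q i)\<^sup>2 / q i)
      = (\<Sum>i<d. (cmod (basis_entry d e A i i))\<^sup>2 / q i) - 1"
    by (simp add: sum_sq_diff_div_eq[OF q] state_sum_diag_basis_entry[OF st onb] diag)
  also have "\<dots> \<le> chi2_div d q e A"
    using chi2_form_ge_diag[OF q(1)] by (simp add: chi2_div_eq_chi2_form)
  finally show ?thesis .
qed

lemma state_chi2_form_bounds:
  assumes st: "is_state d A" and onb: "orthonormal_basis d e"
    and q: "\<forall>i<d. 0 < q i" "(\<Sum>i<d. q i) = 1"
  shows "1 \<le> chi2_form d q (basis_entry d e A)"
    and "chi2_form d q (basis_entry d e A) \<le> (\<Sum>i<d. Re (basis_entry d e A i i) / q i)"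
proof -
  have "0 \<le> (\<Sum>i<d. (Re (basis_entry d e A i i) - q i)\<^sup>2 / q i)"
    using q by (intro sum_nonneg) auto
  then show "1 \<le> chi2_form d q (basis_entry d e A)"
    using chi2_classical_le_chi2_div[OF assms] by (simp add: chi2_div_eq_chi2_form)
  have "chi2_form d q (basis_entry d e A)
      \<le> (\<Sum>i<d. Re (basis_entry d e A i i) / q i) * (\<Sum>i<d. Re (basis_entry d e A i i))"
    using q(1) by (intro chi2_form_le state_basis_entry_norm_le st)
  then show "chi2_form d q (basis_entry d e A) \<le> (\<Sum>i<d. Re (basis_entry d e A i i) / q i)"
    by (simp add: state_sum_diag_basis_entry[OF st onb])
qed

lemma sum_times_cnj_sum:
  fixes z :: "nat \<Rightarrow> complex"
  shows "(\<Sum>t<T. z t) * cnj (\<Sum>t<T. z t)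
     = (\<Sum>t<T. z t * cnj (z t)) + (\<Sum>t<T. \<Sum>s<t. z s * cnj (z t) + cnj (z s) * z t)"
proof (induction T)
  case (Suc T)
  define S where "S = (\<Sum>t<T. z t)"
  have "(\<Sum>t<Suc T. z t) * cnj (\<Sum>t<Suc T. z t)
      = S * cnj S + z T * cnj (z T) + (S * cnj (z T) + cnj S * z T)"
    by (simp add: S_def algebra_simps)
  also have "S * cnj (z T) + cnj S * z T = (\<Sum>s<T. z s * cnj (z T) + cnj (z s) * z T)"
    by (simp add: S_def sum.distrib sum_distrib_right)
  finally show ?case
    using Suc.IH unfolding S_def by (simp add: add_ac)
qed simp

lemma weighted_pairing_hermitian:
  fixes A B :: "nat \<Rightarrow> nat \<Rightarrow> complex"
  assumes A: "\<And>i j. A j i = cnj (A i j)" and B: "\<And>i j. B j i = cnj (B i j)"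
  shows "(\<Sum>i<d. \<Sum>j<d. of_real (2 / (q i + q j)) * (A i j * cnj (B i j) + cnj (A i j) * B i j))
    = 2 * (\<Sum>i<d. \<Sum>j<d. A i j * B j i / of_real ((q i + q j) / 2))"
proof -
  have direct: "(\<Sum>i<d. \<Sum>j<d. of_real (2 / (q i + q j)) * (A i j * cnj (B i j)))
      = (\<Sum>i<d. \<Sum>j<d. A i j * B j i / of_real ((q i + q j) / 2))"
  proof (intro sum.cong refl)
    fix i j
    show "of_real (2 / (q i + q j)) * (A i j * cnj (B i j)) = A i j * B j i / of_real ((q i + q j) / 2)"
      using B[of i j] by (simp add: field_simps)
  qed
  have "(\<Sum>i<d. \<Sum>j<d. of_real (2 / (q i + q j)) * (cnj (A i j) * B i j))
      = (\<Sum>i<d. \<Sum>j<d. of_real (2 / (q j + q i)) * (cnj (A j i) * B j i))"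
    by (rule sum.swap)
  also have "\<dots> = (\<Sum>i<d. \<Sum>j<d. of_real (2 / (q i + q j)) * (A i j * cnj (B i j)))"
  proof (intro sum.cong refl)
    fix i j
    show "of_real (2 / (q j + q i)) * (cnj (A j i) * B j i) = of_real (2 / (q i + q j)) * (A i j * cnj (B i j))"
      using A[of i j] B[of i j] by (simp add: add.commute)
  qed
  finally have swapped: "(\<Sum>i<d. \<Sum>j<d. of_real (2 / (q i + q j)) * (cnj (A i j) * B i j))
      = (\<Sum>i<d. \<Sum>j<d. A i j * B j i / of_real ((q i + q j) / 2))"
    unfolding direct .
  show ?thesis
    by (simp only: distrib_left sum.distrib direct swapped mult_2)
qed

lemma chi2_form_sum:
  fixes Z :: "nat \<Rightarrow> nat \<Rightarrow> nat \<Rightarrow> complex"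
  assumes herm: "\<And>t i j. t < T \<Longrightarrow> Z t j i = cnj (Z t i j)"
  shows "complex_of_real (chi2_form d q (\<lambda>i j. \<Sum>t<T. Z t i j))
    = of_real (\<Sum>t<T. chi2_form d q (Z t))
      + 2 * (\<Sum>t<T. \<Sum>s<t. \<Sum>i<d. \<Sum>j<d. Z s i j * Z t j i / of_real ((q i + q j) / 2))"
proof -
  let ?w = "\<lambda>i j. complex_of_real (2 / (q i + q j))"
  have norm: "complex_of_real (chi2_form d q Y) = (\<Sum>i<d. \<Sum>j<d. ?w i j * (Y i j * cnj (Y i j)))" for Y
    unfolding chi2_form_def by (simp only: of_real_sum of_real_mult complex_norm_square)
  have "complex_of_real (chi2_form d q (\<lambda>i j. \<Sum>t<T. Z t i j))
      = (\<Sum>i<d. \<Sum>j<d. ?w i j * (\<Sum>t<T. Z t i j * cnj (Z t i j)))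
        + (\<Sum>i<d. \<Sum>j<d. ?w i j * (\<Sum>t<T. \<Sum>s<t. Z s i j * cnj (Z t i j) + cnj (Z s i j) * Z t i j))"
    unfolding norm by (simp only: sum_times_cnj_sum distrib_left sum.distrib)
  also have "(\<Sum>i<d. \<Sum>j<d. ?w i j * (\<Sum>t<T. Z t i j * cnj (Z t i j)))
      = of_real (\<Sum>t<T. chi2_form d q (Z t))"
    unfolding of_real_sum norm sum_distrib_left by (rule sum_swap_nested[symmetric])
  also have "(\<Sum>i<d. \<Sum>j<d. ?w i j * (\<Sum>t<T. \<Sum>s<t. Z s i j * cnj (Z t i j) + cnj (Z s i j) * Z t i j))
      = (\<Sum>i<d. \<Sum>t<T. \<Sum>s<t. \<Sum>j<d. ?w i j * (Z s i j * cnj (Z t i j) + cnj (Z s i j) * Z t i j))"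
    unfolding sum_distrib_left by (intro sum.cong refl sum_swap_nested)
  also have "\<dots> = (\<Sum>t<T. \<Sum>s<t. \<Sum>i<d. \<Sum>j<d. ?w i j * (Z s i j * cnj (Z t i j) + cnj (Z s i j) * Z t i j))"
    by (rule sum_swap_nested)
  also have "\<dots> = (\<Sum>t<T. \<Sum>s<t. 2 * (\<Sum>i<d. \<Sum>j<d. Z s i j * Z t j i / of_real ((q i + q j) / 2)))"
    by (intro sum.cong refl weighted_pairing_hermitian herm) auto
  also have "\<dots> = 2 * (\<Sum>t<T. \<Sum>s<t. \<Sum>i<d. \<Sum>j<d. Z s i j * Z t j i / of_real ((q i + q j) / 2))"
    by (simp only: sum_distrib_left)
  finally show ?thesis .
qed

section \<open>Expectations in product states\<close>

lemma expect_cong: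
  assumes "\<And>a b. a \<in> multi_idx d T \<Longrightarrow> b \<in> multi_idx d T \<Longrightarrow> Y b a = Y' b a"
  shows "expect d T R Y = expect d T R Y'"
  unfolding expect_def using assms by (intro sum.cong refl) simp

lemma expect_sum: "expect d T R (\<lambda>a b. \<Sum>i\<in>I. Y i a b) = (\<Sum>i\<in>I. expect d T R (Y i))"
  unfolding expect_def sum_distrib_left by (rule sum_swap_nested[symmetric])

lemma expect_scale: "expect d T R (\<lambda>a b. c * Y a b) = c * expect d T R Y"
  unfolding expect_def by (simp add: sum_distrib_left mult.left_commute)

lemma expect_diff: "expect d T R (\<lambda>a b. Y a b - Y' a b) = expect d T R Y - expect d T R Y'"
  unfolding expect_def by (simp add: right_diff_distrib sum_subtractf)

lemma expect_divide: "expect d T R (\<lambda>a b. Y a b / c) = expect d T R Y / c"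
  unfolding expect_def by (simp add: sum_divide_distrib)

lemma expect_prod_state_tensor:
  "expect d T (prod_state T \<rho>s) (\<lambda>a b. \<Prod>u<T. Y u (a ! u) (b ! u))
     = (\<Prod>u<T. \<Sum>x<d. \<Sum>y<d. \<rho>s u x y * Y u y x)"
  using sum_multi_idx_prod2[where g = "\<lambda>u x y. \<rho>s u x y * Y u y x" and d = d and T = T]
  unfolding expect_def prod_state_def by (simp add: prod.distrib)

lemma sum_mult_identity_eq_mtrace: "(\<Sum>x<d. \<Sum>y<d. A x y * of_bool (y = x)) = mtrace d A"
  by (simp add: mtrace_def of_bool_def if_distrib cong: if_cong)

lemma expect_prod_state_id:
  assumes "\<forall>u<T. mtrace d (\<rho>s u) = 1"
  shows "expect d T (prod_state T \<rho>s) (\<lambda>a b. if a = b then 1 else 0) = 1"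
proof -
  have "expect d T (prod_state T \<rho>s) (\<lambda>a b. if a = b then 1 else 0)
      = expect d T (prod_state T \<rho>s) (\<lambda>a b. \<Prod>u<T. of_bool (a ! u = b ! u))"
    by (rule expect_cong) (auto simp: multi_idx_def prod_of_bool list_eq_iff_nth_eq)
  also have "\<dots> = (\<Prod>u<T. \<Sum>x<d. \<Sum>y<d. \<rho>s u x y * of_bool (y = x))"
    by (rule expect_prod_state_tensor[where Y = "\<lambda>u x y. of_bool (x = y)"])
  also have "\<dots> = (\<Prod>u<T. mtrace d (\<rho>s u))"
    by (simp only: sum_mult_identity_eq_mtrace)
  also have "\<dots> = 1"
    using assms by simp
  finally show ?thesis .
qed

text \<open>C = sum over i, j of |e_j><e_i| (x) |e_i><e_j| / q(i,j), so C_st is a sum of elementary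
  tensors with these two factors in slots s and t and the identity elsewhere.\<close>
definition Cst_factor ::
  "(nat \<Rightarrow> nat \<Rightarrow> complex) \<Rightarrow> nat \<Rightarrow> nat \<Rightarrow> nat \<Rightarrow> nat \<Rightarrow> nat \<Rightarrow> nat \<Rightarrow> nat \<Rightarrow> complex" where
  "Cst_factor e s t i j u x y =
     (if u = s then e j x * cnj (e i y) else if u = t then e i x * cnj (e j y) else of_bool (x = y))"

lemma Cst_eq_sum_prod:
  assumes st: "s < t" "t < T" and len: "length a = T" "length b = T"
  shows "Cst d q e s t a b
    = (\<Sum>i<d. \<Sum>j<d. (\<Prod>u<T. Cst_factor e s t i j u (a ! u) (b ! u)) / of_real ((q i + q j) / 2))"
proof -
  have rest: "(\<Prod>u\<in>{..<T} - {s, t}. Cst_factor e s t i j u (a ! u) (b ! u))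
      = (if \<forall>u<length a. u \<noteq> s \<and> u \<noteq> t \<longrightarrow> a ! u = b ! u then 1 else 0)" for i j
  proof -
    have "(\<Prod>u\<in>{..<T} - {s, t}. Cst_factor e s t i j u (a ! u) (b ! u))
        = (\<Prod>u\<in>{..<T} - {s, t}. of_bool (a ! u = b ! u))"
      by (intro prod.cong refl) (simp add: Cst_factor_def)
    also have "\<dots> = of_bool (\<forall>u\<in>{..<T} - {s, t}. a ! u = b ! u)"
      by (simp add: prod_of_bool)
    finally show ?thesis
      using len by auto
  qed
  have "t \<noteq> s"
    using st by simp
  then show ?thesis
    unfolding Cst_def Cop_def prod_lessThan_split_two[OF st] rest
    by (simp add: Cst_factor_def sum_distrib_right mult.commute mult.left_commute)
qed

lemma expect_prod_state_Cst:
  assumes tr: "\<forall>u<T. mtrace d (\<rho>s u) = 1" and st: "s < t" "t < T"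
  shows "expect d T (prod_state T \<rho>s) (Cst d q e s t)
    = (\<Sum>i<d. \<Sum>j<d. basis_entry d e (\<rho>s s) i j * basis_entry d e (\<rho>s t) j i / of_real ((q i + q j) / 2))"
proof -
  let ?F = "\<lambda>i j u. \<Sum>x<d. \<Sum>y<d. \<rho>s u x y * Cst_factor e s t i j u y x"
  have "t \<noteq> s" "s < T"
    using st by simp_all
  have F_s: "?F i j s = basis_entry d e (\<rho>s s) i j" for i j
    unfolding Cst_factor_def basis_entry_def by (intro sum.cong refl) (simp add: mult.commute mult.left_commute)
  have F_t: "?F i j t = basis_entry d e (\<rho>s t) j i" for i j
    unfolding Cst_factor_def basis_entry_def using \<open>t \<noteq> s\<close>
    by (intro sum.cong refl) (simp add: mult.commute mult.left_commute)
  have F_rest: "?F i j u = 1" if "u \<in> {..<T} - {s, t}" for i j u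
    using that tr by (simp add: Cst_factor_def sum_mult_identity_eq_mtrace mtrace_def)
  have "expect d T (prod_state T \<rho>s) (Cst d q e s t)
      = expect d T (prod_state T \<rho>s)
          (\<lambda>a b. \<Sum>i<d. \<Sum>j<d. (\<Prod>u<T. Cst_factor e s t i j u (a ! u) (b ! u)) / of_real ((q i + q j) / 2))"
    using st by (intro expect_cong) (simp add: Cst_eq_sum_prod multi_idx_def)
  also have "\<dots> = (\<Sum>i<d. \<Sum>j<d. (\<Prod>u<T. ?F i j u) / of_real ((q i + q j) / 2))"
    by (simp only: expect_sum expect_divide expect_prod_state_tensor)
  also have "\<dots> = (\<Sum>i<d. \<Sum>j<d. basis_entry d e (\<rho>s s) i j * basis_entry d e (\<rho>s t) j i / of_real ((q i + q j) / 2))"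
    by (simp add: prod_lessThan_split_two[OF st] F_s F_t F_rest)
  finally show ?thesis .
qed

lemma real_choose_two: "real (n choose 2) = real n * (real n - 1) / 2"
proof (induction n)
  case (Suc n)
  have "Suc n choose 2 = n + (n choose 2)"
    by (simp add: numeral_2_eq_2)
  then show ?case
    using Suc.IH by (simp add: field_simps)
qed simp

lemma expect_Mop:
  "expect d T R (Mop d q e T) = complex_of_real ((real T - 1) / real T) *
     (complex_of_real (1 / real (T choose 2)) * (\<Sum>t<T. \<Sum>s<t. expect d T R (Cst d q e s t))
      - expect d T R (\<lambda>a b. if a = b then 1 else 0))"
proof -
  have "Mop d q e T = (\<lambda>a b. complex_of_real ((real T - 1) / real T) *
     (complex_of_real (1 / real (T choose 2)) * (\<Sum>t<T. \<Sum>s<t. Cst d q e s t a b) - (if a = b then 1 else 0)))"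
    by (intro ext) (simp add: Mop_def)
  then show ?thesis
    by (simp only: expect_scale expect_diff expect_sum)
qed

lemma expect_Mop_minus_chi2_div:
  assumes T2: "2 \<le> T" and states: "\<forall>t<T. is_state d (\<rho>s t)"
  shows "expect d T (prod_state T \<rho>s) (Mop d q e T)
           - of_real (chi2_div d q e (\<lambda>x y. (\<Sum>t<T. \<rho>s t x y) / of_nat T))
         = of_real (1 / T - (\<Sum>t<T. chi2_form d q (basis_entry d e (\<rho>s t))) / (real T)\<^sup>2)"
proof -
  define Z where "Z t = basis_entry d e (\<rho>s t)" for t
  define N where "N = chi2_form d q (\<lambda>i j. \<Sum>t<T. Z t i j)"
  define S where "S = (\<Sum>t<T. chi2_form d q (Z t))"
  have tr: "\<forall>u<T. mtrace d (\<rho>s u) = 1"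
    using states is_state_mtrace by blast
  have herm: "Z t j i = cnj (Z t i j)" if "t < T" for t i j
    unfolding Z_def using states that by (intro basis_entry_hermitian is_state_hermitian) simp
  have "(\<Sum>t<T. \<Sum>s<t. expect d T (prod_state T \<rho>s) (Cst d q e s t))
      = (\<Sum>t<T. \<Sum>s<t. \<Sum>i<d. \<Sum>j<d. Z s i j * Z t j i / of_real ((q i + q j) / 2))"
    unfolding Z_def using tr by (intro sum.cong refl expect_prod_state_Cst) auto
  also have "\<dots> = of_real ((N - S) / 2)"
    using chi2_form_sum[of T Z d q, OF herm] unfolding N_def S_def by simp
  finally have pairs: "(\<Sum>t<T. \<Sum>s<t. expect d T (prod_state T \<rho>s) (Cst d q e s t)) = of_real ((N - S) / 2)" .
  have "basis_entry d e (\<lambda>x y. (\<Sum>t<T. \<rho>s t x y) / of_nat T) = (\<lambda>i j. (\<Sum>t<T. Z t i j) / of_nat T)"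
    by (intro ext) (simp add: basis_entry_average Z_def)
  then have chi2: "chi2_div d q e (\<lambda>x y. (\<Sum>t<T. \<rho>s t x y) / of_nat T) = N / (real T)\<^sup>2 - 1"
    by (simp add: chi2_div_eq_chi2_form chi2_form_divide N_def)
  have "expect d T (prod_state T \<rho>s) (Mop d q e T)
          - of_real (chi2_div d q e (\<lambda>x y. (\<Sum>t<T. \<rho>s t x y) / of_nat T))
        = of_real ((real T - 1) / T * (1 / (real T * (real T - 1) / 2) * ((N - S) / 2) - 1)
                   - (N / (real T)\<^sup>2 - 1))"
    unfolding expect_Mop pairs expect_prod_state_id[OF tr] chi2 real_choose_two by simp
  also have "\<dots> = of_real (1 / T - S / (real T)\<^sup>2)"
    using T2 by (simp add: field_simps power2_eq_square)
  finally show ?thesis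
    unfolding S_def Z_def .
qed

lemma sum_div_le_sqrt_mult_sqrt:
  fixes y q :: "nat \<Rightarrow> real"
  assumes q: "\<forall>i<d. 0 < q i" and \<gamma>: "0 < \<gamma>" "\<forall>i<d. \<gamma> \<le> q i"
  shows "(\<Sum>i<d. y i / q i) \<le> sqrt (\<Sum>i<d. (y i)\<^sup>2 / q i) * sqrt (d / \<gamma>)"
proof -
  let ?a = "\<lambda>i. y i / sqrt (q i)" and ?b = "\<lambda>i. 1 / sqrt (q i)"
  have a: "(\<Sum>i<d. (?a i)\<^sup>2) = (\<Sum>i<d. (y i)\<^sup>2 / q i)"
    and ab: "(\<Sum>i<d. y i / q i) = (\<Sum>i<d. ?a i * ?b i)"
    using q by (auto intro!: sum.cong simp: power_divide abs_of_pos)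
  have b: "(\<Sum>i<d. (?b i)\<^sup>2) \<le> d / \<gamma>"
  proof -
    have "(\<Sum>i<d. (?b i)\<^sup>2) \<le> (\<Sum>i<d. 1 / \<gamma>)"
      using q \<gamma> by (intro sum_mono) (auto simp: power_divide frac_le)
    then show ?thesis
      by simp
  qed
  have "(\<Sum>i<d. y i / q i) \<le> sqrt ((\<Sum>i<d. ?a i * ?b i)\<^sup>2)"
    by (simp add: ab)
  also have "\<dots> \<le> sqrt ((\<Sum>i<d. (?a i)\<^sup>2) * (\<Sum>i<d. (?b i)\<^sup>2))"
    by (rule real_sqrt_le_mono[OF Cauchy_Schwarz_ineq_sum])
  also have "\<dots> \<le> sqrt (\<Sum>i<d. (y i)\<^sup>2 / q i) * sqrt (d / \<gamma>)"
    unfolding a real_sqrt_mult using b q by (intro mult_left_mono real_sqrt_le_mono) (auto intro!: sum_nonneg)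
  finally show ?thesis .
qed

lemma sum_div_diff_card_le:
  fixes p q :: "nat \<Rightarrow> real" and \<gamma> \<mu> :: real
  assumes q: "\<forall>i<d. 0 < q i" and \<gamma>: "0 < \<gamma>" "\<forall>i<d. \<gamma> \<le> q i"
    and chi2: "(\<Sum>i<d. (p i - q i)\<^sup>2 / q i) \<le> \<mu>"
  shows "(\<Sum>i<d. p i / q i) - d \<le> sqrt \<mu> * sqrt (d / \<gamma>)"
proof -
  have "(\<Sum>i<d. p i / q i) = (\<Sum>i<d. (p i - q i) / q i + 1)"
  proof (rule sum.cong[OF refl])
    fix i
    assume "i \<in> {..<d}"
    then have "0 < q i"
      using q by simp
    then show "p i / q i = (p i - q i) / q i + 1"
      by (simp add: diff_divide_distrib)
  qed
  then have "(\<Sum>i<d. p i / q i) - d = (\<Sum>i<d. (p i - q i) / q i)"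
    by (simp add: sum.distrib)
  also have "\<dots> \<le> sqrt (\<Sum>i<d. (p i - q i)\<^sup>2 / q i) * sqrt (d / \<gamma>)"
    using q \<gamma> by (rule sum_div_le_sqrt_mult_sqrt)
  also have "\<dots> \<le> sqrt \<mu> * sqrt (d / \<gamma>)"
    using chi2 \<gamma>(1) by (intro mult_right_mono real_sqrt_le_mono) simp_all
  finally show ?thesis .
qed

lemma deviation_bound:
  fixes n p q :: "nat \<Rightarrow> real" and T :: nat and \<gamma> \<mu> :: real
  assumes T: "0 < T" and q: "\<forall>i<d. 0 < q i" and \<gamma>: "0 < \<gamma>" "\<forall>i<d. \<gamma> \<le> q i"
    and n_ge: "\<forall>t<T. 1 \<le> n t" and n_sum: "(\<Sum>t<T. n t) \<le> T * (\<Sum>i<d. p i / q i)"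
    and chi2: "(\<Sum>i<d. (p i - q i)\<^sup>2 / q i) \<le> \<mu>"
  shows "\<bar>1 / T - (\<Sum>t<T. n t) / (real T)\<^sup>2\<bar> \<le> sqrt (d / (\<gamma> * T)) * sqrt \<mu> + (real d - 1) / T"
proof -
  define X where "X = (\<Sum>i<d. p i / q i) - d"
  have X: "X \<le> sqrt \<mu> * sqrt (d / \<gamma>)"
    unfolding X_def using q \<gamma> chi2 by (rule sum_div_diff_card_le)
  have "0 \<le> (\<Sum>i<d. (p i - q i)\<^sup>2 / q i)"
    using q by (intro sum_nonneg) auto
  then have "0 \<le> \<mu>"
    using chi2 by linarith
  have "real T \<le> (\<Sum>t<T. n t)"
    using sum_mono[of "{..<T}" "\<lambda>_. 1" n] n_ge by simp
  then have "\<bar>1 / T - (\<Sum>t<T. n t) / (real T)\<^sup>2\<bar> = ((\<Sum>t<T. n t) - T) / (real T)\<^sup>2"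
    using T by (simp add: abs_if field_simps power2_eq_square)
  also have "\<dots> \<le> (T * (X + d) - T) / (real T)\<^sup>2"
    using n_sum by (intro divide_right_mono) (simp_all add: X_def)
  also have "\<dots> = X / T + (real d - 1) / T"
    using T by (simp add: field_simps power2_eq_square)
  also have "X / T \<le> sqrt (d / (\<gamma> * T)) * sqrt \<mu>"
  proof -
    have "sqrt T \<le> sqrt (T * T)"
      by (intro real_sqrt_le_mono) (metis of_nat_le_iff of_nat_mult le_square)
    then have "sqrt T \<le> T"
      by simp
    have "X / T \<le> sqrt \<mu> * sqrt (d / \<gamma>) / T"
      using X by (simp add: divide_right_mono)
    also have "\<dots> \<le> sqrt \<mu> * sqrt (d / \<gamma>) / sqrt T"
      using T \<open>0 \<le> \<mu>\<close> \<gamma> \<open>sqrt T \<le> T\<close> by (intro divide_left_mono) simp_all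
    also have "\<dots> = sqrt (d / (\<gamma> * T)) * sqrt \<mu>"
      by (simp add: real_sqrt_divide real_sqrt_mult)
    finally show ?thesis .
  qed
  finally show ?thesis
    by simp
qed

theorem proposition8p6:
  fixes d T :: nat
    and \<sigma> :: "nat \<Rightarrow> nat \<Rightarrow> complex"
    and q :: "nat \<Rightarrow> real"
    and e :: "nat \<Rightarrow> nat \<Rightarrow> complex"
    and \<rho>s :: "nat \<Rightarrow> nat \<Rightarrow> nat \<Rightarrow> complex"
  assumes sigma_state: "is_state d \<sigma>"
    and onb: "orthonormal_basis d e"
    and eig: "\<forall>x<d. \<forall>y<d. \<sigma> x y = (\<Sum>i<d. complex_of_real (q i) * e i x * cnj (e i y))"
    and full_rank: "\<forall>i<d. q i > 0"
    and T2: "T \<ge> 2"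
    and states: "\<forall>t<T. is_state d (\<rho>s t)"
  shows "cmod (expect d T (prod_state T \<rho>s) (Mop d q e T)
               - complex_of_real (chi2_div d q e (\<lambda>x y. (\<Sum>t<T. \<rho>s t x y) / of_nat T)))
         \<le> sqrt (real d / (Min (q ` {..<d}) * real T))
             * sqrt (chi2_div d q e (\<lambda>x y. (\<Sum>t<T. \<rho>s t x y) / of_nat T))
           + (real d - 1) / real T"
proof -
  define \<rho> where "\<rho> = (\<lambda>x y. (\<Sum>t<T. \<rho>s t x y) / of_nat T)"
  define n where "n t = chi2_form d q (basis_entry d e (\<rho>s t))" for t
  define p where "p i = Re (basis_entry d e \<rho> i i)" for i
  define \<gamma> where "\<gamma> = Min (q ` {..<d})"
  have T: "0 < T"
    using T2 by simp
  have q_sum: "(\<Sum>i<d. q i) = 1"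
    using eigenvalues_sum_eq_mtrace[OF onb eig] is_state_mtrace[OF sigma_state]
    by (metis of_real_eq_1_iff of_real_sum)
  then have "d \<noteq> 0"
    by (metis lessThan_0 sum.empty zero_neq_one)
  then have \<gamma>: "0 < \<gamma>" "\<forall>i<d. \<gamma> \<le> q i"
    using full_rank unfolding \<gamma>_def by (subst Min_gr_iff) auto
  have n_ge: "\<forall>t<T. 1 \<le> n t"
    unfolding n_def using states onb full_rank q_sum by (blast intro: state_chi2_form_bounds(1))
  have n_sum: "(\<Sum>t<T. n t) \<le> T * (\<Sum>i<d. p i / q i)"
    unfolding p_def \<rho>_def sum_diag_div_eq_mult_average[symmetric] n_def
    using states onb full_rank q_sum by (intro sum_mono state_chi2_form_bounds(2)) auto
  have chi2: "(\<Sum>i<d. (p i - q i)\<^sup>2 / q i) \<le> chi2_div d q e \<rho>"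
    unfolding p_def \<rho>_def
    by (rule chi2_classical_le_chi2_div[OF is_state_average[OF T states] onb full_rank q_sum])
  have "cmod (expect d T (prod_state T \<rho>s) (Mop d q e T) - of_real (chi2_div d q e \<rho>))
      = \<bar>1 / T - (\<Sum>t<T. n t) / (real T)\<^sup>2\<bar>"
    unfolding \<rho>_def expect_Mop_minus_chi2_div[OF T2 states] n_def by (rule norm_of_real)
  also have "\<dots> \<le> sqrt (real d / (\<gamma> * real T)) * sqrt (chi2_div d q e \<rho>) + (real d - 1) / real T"
    by (rule deviation_bound[OF T full_rank \<gamma> n_ge n_sum chi2])
  finally show ?thesis
    unfolding \<rho>_def \<gamma>_def .
qed

end
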